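(* Let $(V,v)$ be the upper and lower probabilities on $(\Omega,\mathcal{F})$ generated by a nonempty set $\mathcal{P}\subseteq\Delta(\Omega,\mathcal{F})$. The following are equivalent: (i) $V$ is continuous at $\emptyset$; (ii) $V$ is continuous; (iii) $v$ is continuous; (iv) $v$ is continuous at $\Omega$. Moreover, each of (i)–(iv) implies (v): $\mathrm{core}(v)\subseteq\Delta^{\sigma}(\Omega,\mathcal{F})$.
   Context: $\Delta(\Omega,\mathcal{F})$ is the set of finitely additive probabilities on $\mathcal{F}$ and $\Delta^{\sigma}(\Omega,\mathcal{F})$ the set of countably additive probabilities. $V(A)=\sup_{P\in\mathcal{P}}P(A)$, $v(A)=\inf_{P\in\mathcal{P}}P(A)$. A set function $\mu$ is continuous if $\mu(A_n)\to\mu(A)$ whenever $A_n\uparrow A$ or $A_n\downarrow A$; continuous at $\emptyset$ if $\mu(A_n)\to0$ whenever $A_n\downarrow\emptyset$; continuous at $\Omega$ if $\mu(A_n)\to1$ whenever $A_n\uparrow\Omega$. $\mathrm{core}(v)=\{P\in\Delta(\Omega,\mathcal{F}): P\ge v \text{ on } \mathcal{F}\}$. *)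

theory Defs
  imports "HOL-Analysis.Analysis"
begin

definition fa_prob :: "'a set \<Rightarrow> 'a set set \<Rightarrow> ('a set \<Rightarrow> real) \<Rightarrow> bool" where
  "fa_prob \<Omega> F P \<longleftrightarrow> (\<forall>A\<in>F. 0 \<le> P A) \<and> P \<Omega> = 1 \<and>
     (\<forall>A\<in>F. \<forall>B\<in>F. A \<inter> B = {} \<longrightarrow> P (A \<union> B) = P A + P B)"

definition Delta :: "'a set \<Rightarrow> 'a set set \<Rightarrow> ('a set \<Rightarrow> real) set" where
  "Delta \<Omega> F = {P. fa_prob \<Omega> F P}"

definition Delta_sigma :: "'a set \<Rightarrow> 'a set set \<Rightarrow> ('a set \<Rightarrow> real) set" where
  "Delta_sigma \<Omega> F = {P. fa_prob \<Omega> F P \<and>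
     (\<forall>A::nat \<Rightarrow> 'a set. range A \<subseteq> F \<longrightarrow> disjoint_family A \<longrightarrow> (\<Union>n. A n) \<in> F \<longrightarrow>
        (\<lambda>n. P (A n)) sums P (\<Union>n. A n))}"

definition upper_prob :: "('a set \<Rightarrow> real) set \<Rightarrow> 'a set \<Rightarrow> real" where
  "upper_prob \<P> A = (SUP P\<in>\<P>. P A)"

definition lower_prob :: "('a set \<Rightarrow> real) set \<Rightarrow> 'a set \<Rightarrow> real" where
  "lower_prob \<P> A = (INF P\<in>\<P>. P A)"

definition set_fun_continuous :: "'a set set \<Rightarrow> ('a set \<Rightarrow> real) \<Rightarrow> bool" where
  "set_fun_continuous F \<mu> \<longleftrightarrow>
     (\<forall>A (B::nat \<Rightarrow> 'a set). range B \<subseteq> F \<longrightarrow> A \<in> F \<longrightarrow> incseq B \<longrightarrow> (\<Union>n. B n) = A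
        \<longrightarrow> (\<lambda>n. \<mu> (B n)) \<longlonglongrightarrow> \<mu> A) \<and>
     (\<forall>A (B::nat \<Rightarrow> 'a set). range B \<subseteq> F \<longrightarrow> A \<in> F \<longrightarrow> decseq B \<longrightarrow> (\<Inter>n. B n) = A
        \<longrightarrow> (\<lambda>n. \<mu> (B n)) \<longlonglongrightarrow> \<mu> A)"

definition continuous_at_empty :: "'a set set \<Rightarrow> ('a set \<Rightarrow> real) \<Rightarrow> bool" where
  "continuous_at_empty F \<mu> \<longleftrightarrow>
     (\<forall>B::nat \<Rightarrow> 'a set. range B \<subseteq> F \<longrightarrow> decseq B \<longrightarrow> (\<Inter>n. B n) = {}
        \<longrightarrow> (\<lambda>n. \<mu> (B n)) \<longlonglongrightarrow> 0)"

definition continuous_at_Omega :: "'a set \<Rightarrow> 'a set set \<Rightarrow> ('a set \<Rightarrow> real) \<Rightarrow> bool" where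
  "continuous_at_Omega \<Omega> F \<mu> \<longleftrightarrow>
     (\<forall>B::nat \<Rightarrow> 'a set. range B \<subseteq> F \<longrightarrow> incseq B \<longrightarrow> (\<Union>n. B n) = \<Omega>
        \<longrightarrow> (\<lambda>n. \<mu> (B n)) \<longlonglongrightarrow> 1)"

definition core :: "'a set \<Rightarrow> 'a set set \<Rightarrow> ('a set \<Rightarrow> real) \<Rightarrow> ('a set \<Rightarrow> real) set" where
  "core \<Omega> F \<nu> = {P \<in> Delta \<Omega> F. \<forall>A\<in>F. \<nu> A \<le> P A}"

end

theory Submission
  imports Defs
begin

text \<open>Complementation, V A = 1 - v (\<Omega> - A), turns increasing sequences into decreasing ones,
  so V and v are continuous together, and continuity of v at \<Omega> is continuity of V at the
  empty set. As a supremum of additive set functions, V is monotone and satisfies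
  V B \<le> V A + V (B - A) for A \<subseteq> B; hence continuity at the empty set controls V (B n) - V A
  along every monotone sequence B n converging to A. Finally, every element of core(v) lies
  below V, so it inherits continuity at the empty set, and for a finitely additive
  probability that is countable additivity.\<close>

lemma set_fun_continuous_incseqD:
  "set_fun_continuous F \<mu> \<Longrightarrow> range B \<subseteq> F \<Longrightarrow> A \<in> F \<Longrightarrow> incseq B \<Longrightarrow> (\<Union>n. B n) = A
    \<Longrightarrow> (\<lambda>n. \<mu> (B n)) \<longlonglongrightarrow> \<mu> A"
  unfolding set_fun_continuous_def by blast

lemma set_fun_continuous_decseqD:
  "set_fun_continuous F \<mu> \<Longrightarrow> range B \<subseteq> F \<Longrightarrow> A \<in> F \<Longrightarrow> decseq B \<Longrightarrow> (\<Inter>n. B n) = A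
    \<Longrightarrow> (\<lambda>n. \<mu> (B n)) \<longlonglongrightarrow> \<mu> A"
  unfolding set_fun_continuous_def by blast

lemma continuous_at_emptyD:
  "continuous_at_empty F \<mu> \<Longrightarrow> range B \<subseteq> F \<Longrightarrow> decseq B \<Longrightarrow> (\<Inter>n. B n) = {}
    \<Longrightarrow> (\<lambda>n. \<mu> (B n)) \<longlonglongrightarrow> 0"
  unfolding continuous_at_empty_def by blast

lemma continuous_at_OmegaD:
  "continuous_at_Omega \<Omega> F \<mu> \<Longrightarrow> range B \<subseteq> F \<Longrightarrow> incseq B \<Longrightarrow> (\<Union>n. B n) = \<Omega>
    \<Longrightarrow> (\<lambda>n. \<mu> (B n)) \<longlonglongrightarrow> 1"
  unfolding continuous_at_Omega_def by blast

lemma set_fun_continuous_imp_continuous_at_empty: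
  assumes "set_fun_continuous F \<mu>" "{} \<in> F" "\<mu> {} = 0"
  shows "continuous_at_empty F \<mu>"
  using assms set_fun_continuous_decseqD unfolding continuous_at_empty_def by metis

lemma set_fun_continuous_imp_continuous_at_Omega:
  assumes "set_fun_continuous F \<mu>" "\<Omega> \<in> F" "\<mu> \<Omega> = 1"
  shows "continuous_at_Omega \<Omega> F \<mu>"
  using assms set_fun_continuous_incseqD unfolding continuous_at_Omega_def by metis

lemma continuous_at_empty_imp_set_fun_continuous:
  assumes "ring_of_sets \<Omega> F"
    and mono: "\<And>A B. A \<in> F \<Longrightarrow> B \<in> F \<Longrightarrow> A \<subseteq> B \<Longrightarrow> \<mu> A \<le> \<mu> B"
    and subadd: "\<And>A B. A \<in> F \<Longrightarrow> B \<in> F \<Longrightarrow> A \<subseteq> B \<Longrightarrow> \<mu> B \<le> \<mu> A + \<mu> (B - A)"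
    and cont: "continuous_at_empty F \<mu>"
  shows "set_fun_continuous F \<mu>"
proof -
  interpret ring_of_sets \<Omega> F by fact
  have inc: "(\<lambda>n. \<mu> (B n)) \<longlonglongrightarrow> \<mu> A"
    if B: "range B \<subseteq> F" "A \<in> F" "incseq B" "(\<Union>n. B n) = A" for A B
  proof -
    have "range (\<lambda>n. A - B n) \<subseteq> F" "decseq (\<lambda>n. A - B n)" "(\<Inter>n. A - B n) = {}"
      using B by (auto simp: incseq_def decseq_def)
    then have "(\<lambda>n. \<mu> A - \<mu> (A - B n)) \<longlonglongrightarrow> \<mu> A - 0"
      by (intro tendsto_diff tendsto_const continuous_at_emptyD[OF cont])
    moreover have "\<mu> A - \<mu> (A - B n) \<le> \<mu> (B n)" "\<mu> (B n) \<le> \<mu> A" for n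
    proof -
      have "B n \<in> F" "B n \<subseteq> A" using B by auto
      with mono subadd B(2) have "\<mu> A \<le> \<mu> (B n) + \<mu> (A - B n)" "\<mu> (B n) \<le> \<mu> A" by blast+
      then show "\<mu> A - \<mu> (A - B n) \<le> \<mu> (B n)" "\<mu> (B n) \<le> \<mu> A" by linarith+
    qed
    ultimately show ?thesis
      using tendsto_sandwich[of "\<lambda>n. \<mu> A - \<mu> (A - B n)" _ sequentially "\<lambda>n. \<mu> A"]
      by (simp add: always_eventually)
  qed
  have dec: "(\<lambda>n. \<mu> (B n)) \<longlonglongrightarrow> \<mu> A"
    if B: "range B \<subseteq> F" "A \<in> F" "decseq B" "(\<Inter>n. B n) = A" for A B
  proof -
    have "range (\<lambda>n. B n - A) \<subseteq> F" "decseq (\<lambda>n. B n - A)" "(\<Inter>n. B n - A) = {}"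
      using B by (auto simp: decseq_def)
    then have "(\<lambda>n. \<mu> A + \<mu> (B n - A)) \<longlonglongrightarrow> \<mu> A + 0"
      by (intro tendsto_add tendsto_const continuous_at_emptyD[OF cont])
    moreover have "\<mu> A \<le> \<mu> (B n)" "\<mu> (B n) \<le> \<mu> A + \<mu> (B n - A)" for n
    proof -
      have "B n \<in> F" "A \<subseteq> B n" using B by auto
      with mono subadd B(2) show "\<mu> A \<le> \<mu> (B n)" "\<mu> (B n) \<le> \<mu> A + \<mu> (B n - A)" by blast+
    qed
    ultimately show ?thesis
      using tendsto_sandwich[of "\<lambda>n. \<mu> A" _ sequentially "\<lambda>n. \<mu> A + \<mu> (B n - A)"]
      by (simp add: always_eventually)
  qed
  show ?thesis unfolding set_fun_continuous_def using inc dec by blast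
qed

lemma set_fun_continuous_compl_dual:
  assumes "algebra \<Omega> F" and dual: "\<And>A. A \<in> F \<Longrightarrow> \<mu> A = 1 - \<nu> (\<Omega> - A)"
    and cont: "set_fun_continuous F \<nu>"
  shows "set_fun_continuous F \<mu>"
proof -
  interpret algebra \<Omega> F by fact
  have lim: "(\<lambda>n. \<mu> (B n)) \<longlonglongrightarrow> \<mu> A"
    if "range B \<subseteq> F" "A \<in> F" "(\<lambda>n. \<nu> (\<Omega> - B n)) \<longlonglongrightarrow> \<nu> (\<Omega> - A)" for A B
  proof -
    have "(\<lambda>n. 1 - \<nu> (\<Omega> - B n)) \<longlonglongrightarrow> 1 - \<nu> (\<Omega> - A)"
      by (intro tendsto_diff tendsto_const that(3))
    moreover have "\<mu> (B n) = 1 - \<nu> (\<Omega> - B n)" for n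
      using that(1) dual by blast
    ultimately show ?thesis using dual[OF that(2)] by simp
  qed
  have inc: "(\<lambda>n. \<mu> (B n)) \<longlonglongrightarrow> \<mu> A"
    if B: "range B \<subseteq> F" "A \<in> F" "incseq B" "(\<Union>n. B n) = A" for A B
  proof (rule lim[OF B(1,2)])
    have "range (\<lambda>n. \<Omega> - B n) \<subseteq> F" "\<Omega> - A \<in> F" using B(1,2) by auto
    moreover have "decseq (\<lambda>n. \<Omega> - B n)" using B(3) by (auto simp: incseq_def decseq_def)
    moreover have "(\<Inter>n. \<Omega> - B n) = \<Omega> - A" using B(4) by blast
    ultimately show "(\<lambda>n. \<nu> (\<Omega> - B n)) \<longlonglongrightarrow> \<nu> (\<Omega> - A)"
      by (rule set_fun_continuous_decseqD[OF cont])
  qed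
  have dec: "(\<lambda>n. \<mu> (B n)) \<longlonglongrightarrow> \<mu> A"
    if B: "range B \<subseteq> F" "A \<in> F" "decseq B" "(\<Inter>n. B n) = A" for A B
  proof (rule lim[OF B(1,2)])
    have "range (\<lambda>n. \<Omega> - B n) \<subseteq> F" "\<Omega> - A \<in> F" using B(1,2) by auto
    moreover have "incseq (\<lambda>n. \<Omega> - B n)" using B(3) by (auto simp: incseq_def decseq_def)
    moreover have "(\<Union>n. \<Omega> - B n) = \<Omega> - A" using B(4) by blast
    ultimately show "(\<lambda>n. \<nu> (\<Omega> - B n)) \<longlonglongrightarrow> \<nu> (\<Omega> - A)"
      by (rule set_fun_continuous_incseqD[OF cont])
  qed
  show ?thesis unfolding set_fun_continuous_def using inc dec by blast
qed

lemma continuous_at_empty_compl_dual: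
  assumes "algebra \<Omega> F" and dual: "\<And>A. A \<in> F \<Longrightarrow> \<mu> A = 1 - \<nu> (\<Omega> - A)"
    and cont: "continuous_at_Omega \<Omega> F \<nu>"
  shows "continuous_at_empty F \<mu>"
  unfolding continuous_at_empty_def
proof (intro allI impI)
  interpret algebra \<Omega> F by fact
  fix B :: "nat \<Rightarrow> 'a set"
  assume B: "range B \<subseteq> F" "decseq B" "(\<Inter>n. B n) = {}"
  have "range (\<lambda>n. \<Omega> - B n) \<subseteq> F" using B(1) by auto
  moreover have "incseq (\<lambda>n. \<Omega> - B n)" using B(2) by (auto simp: incseq_def decseq_def)
  moreover have "(\<Union>n. \<Omega> - B n) = \<Omega>" using B(3) by blast
  ultimately have "(\<lambda>n. 1 - \<nu> (\<Omega> - B n)) \<longlonglongrightarrow> 1 - 1"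
    by (intro tendsto_diff tendsto_const continuous_at_OmegaD[OF cont])
  moreover have "\<mu> (B n) = 1 - \<nu> (\<Omega> - B n)" for n
    using B(1) dual by blast
  ultimately show "(\<lambda>n. \<mu> (B n)) \<longlonglongrightarrow> 0" by simp
qed

lemma continuous_at_empty_dominated:
  assumes "\<And>A. A \<in> F \<Longrightarrow> 0 \<le> \<nu> A \<and> \<nu> A \<le> \<mu> A" "continuous_at_empty F \<mu>"
  shows "continuous_at_empty F \<nu>"
  unfolding continuous_at_empty_def
proof (intro allI impI)
  fix B :: "nat \<Rightarrow> 'a set"
  assume B: "range B \<subseteq> F" "decseq B" "(\<Inter>n. B n) = {}"
  have "(\<lambda>n. \<mu> (B n)) \<longlonglongrightarrow> 0" by (rule continuous_at_emptyD[OF assms(2) B])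
  moreover have "0 \<le> \<nu> (B n)" "\<nu> (B n) \<le> \<mu> (B n)" for n
    using assms(1) B(1) by blast+
  ultimately show "(\<lambda>n. \<nu> (B n)) \<longlonglongrightarrow> 0"
    using tendsto_sandwich[of "\<lambda>n. 0" _ sequentially "\<lambda>n. \<mu> (B n)"]
    by (simp add: always_eventually)
qed

lemma fa_prob_empty:
  assumes "ring_of_sets \<Omega> F" "fa_prob \<Omega> F P"
  shows "P {} = 0"
proof -
  interpret ring_of_sets \<Omega> F by fact
  have "P ({} \<union> {}) = P {} + P {}"
    using assms(2) unfolding fa_prob_def by blast
  then show ?thesis by simp
qed

lemma fa_prob_Diff:
  assumes "ring_of_sets \<Omega> F" "fa_prob \<Omega> F P" "A \<in> F" "B \<in> F" "A \<subseteq> B"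
  shows "P B = P A + P (B - A)"
proof -
  interpret ring_of_sets \<Omega> F by fact
  have "P (A \<union> (B - A)) = P A + P (B - A)"
    using assms unfolding fa_prob_def by blast
  then show ?thesis using \<open>A \<subseteq> B\<close> by (simp add: Un_absorb1)
qed

lemma fa_prob_compl:
  assumes "algebra \<Omega> F" "fa_prob \<Omega> F P" "A \<in> F"
  shows "P (\<Omega> - A) = 1 - P A"
proof -
  interpret algebra \<Omega> F by fact
  have "P \<Omega> = P A + P (\<Omega> - A)"
    using fa_prob_Diff[OF ring_of_sets_axioms assms(2,3) top sets_into_space[OF assms(3)]] .
  then show ?thesis using assms(2) unfolding fa_prob_def by simp
qed

lemma fa_prob_le_1:
  assumes "algebra \<Omega> F" "fa_prob \<Omega> F P" "A \<in> F"
  shows "P A \<le> 1"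
proof -
  interpret algebra \<Omega> F by fact
  have "0 \<le> P (\<Omega> - A)" using assms unfolding fa_prob_def by blast
  then show ?thesis using fa_prob_compl[OF assms] by simp
qed

lemma fa_prob_finite_UN:
  fixes A :: "nat \<Rightarrow> 'a set"
  assumes "ring_of_sets \<Omega> F" "fa_prob \<Omega> F P" "range A \<subseteq> F" "disjoint_family A"
  shows "P (\<Union>i<n. A i) = (\<Sum>i<n. P (A i))"
proof (induction n)
  case 0
  show ?case using fa_prob_empty[OF assms(1,2)] by simp
next
  case (Suc n)
  interpret ring_of_sets \<Omega> F by fact
  have "A i \<inter> A n = {}" if "i < n" for i
    using \<open>disjoint_family A\<close> that by (simp add: disjoint_family_on_def)
  then have "(\<Union>i<n. A i) \<inter> A n = {}" by blast
  moreover have "(\<Union>i<n. A i) \<in> F" "A n \<in> F" using assms(3) by auto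
  ultimately have "P ((\<Union>i<n. A i) \<union> A n) = P (\<Union>i<n. A i) + P (A n)"
    using assms(2) unfolding fa_prob_def by blast
  then show ?case using Suc.IH by (simp add: lessThan_Suc Un_commute)
qed

lemma fa_prob_continuous_at_empty_imp_Delta_sigma:
  assumes "ring_of_sets \<Omega> F" "fa_prob \<Omega> F Q" "continuous_at_empty F Q"
  shows "Q \<in> Delta_sigma \<Omega> F"
proof -
  interpret ring_of_sets \<Omega> F by fact
  have "(\<lambda>n. Q (A n)) sums Q (\<Union>n. A n)"
    if A: "range A \<subseteq> F" "disjoint_family A" "(\<Union>n. A n) \<in> F" for A :: "nat \<Rightarrow> 'a set"
  proof -
    define R where "R n = (\<Union>n. A n) - (\<Union>i<n. A i)" for n
    have partial_in: "(\<Union>i<n. A i) \<in> F" for n using A(1) by auto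
    have "range R \<subseteq> F" using partial_in A(3) by (auto simp: R_def)
    moreover have "decseq R" by (auto simp: R_def decseq_def)
    moreover have "(\<Inter>n. R n) = {}"
    proof (intro equalityI subsetI)
      fix x assume x: "x \<in> (\<Inter>n. R n)"
      then obtain n where "x \<in> A n" by (auto simp: R_def)
      moreover have "x \<in> R (Suc n)" using x by blast
      ultimately show "x \<in> {}" by (simp add: R_def)
    qed simp
    ultimately have "(\<lambda>n. Q (\<Union>n. A n) - Q (R n)) \<longlonglongrightarrow> Q (\<Union>n. A n) - 0"
      by (intro tendsto_diff tendsto_const continuous_at_emptyD[OF assms(3)])
    moreover have "(\<Sum>i<n. Q (A i)) = Q (\<Union>n. A n) - Q (R n)" for n
    proof -
      have "Q (\<Union>n. A n) = Q (\<Union>i<n. A i) + Q (R n)"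
        unfolding R_def by (rule fa_prob_Diff[OF ring_of_sets_axioms assms(2) partial_in A(3)]) auto
      then show ?thesis using fa_prob_finite_UN[OF ring_of_sets_axioms assms(2) A(1,2)] by simp
    qed
    ultimately show ?thesis unfolding sums_def by simp
  qed
  then show ?thesis using assms(2) unfolding Delta_sigma_def by blast
qed

locale fa_prob_family = algebra \<Omega> F
  for \<Omega> :: "'a set" and F :: "'a set set" +
  fixes \<P> :: "('a set \<Rightarrow> real) set"
  assumes family_nonempty: "\<P> \<noteq> {}"
    and family_subset_Delta: "\<P> \<subseteq> Delta \<Omega> F"
begin

lemma fa_prob_member: "P \<in> \<P> \<Longrightarrow> fa_prob \<Omega> F P"
  using family_subset_Delta unfolding Delta_def by auto

lemma upper_prob_upper: "P \<in> \<P> \<Longrightarrow> A \<in> F \<Longrightarrow> P A \<le> upper_prob \<P> A"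
  unfolding upper_prob_def
  by (rule cSUP_upper) (auto intro!: bdd_aboveI[of _ 1] fa_prob_le_1[OF algebra_axioms] fa_prob_member)

lemma upper_prob_least: "(\<And>P. P \<in> \<P> \<Longrightarrow> P A \<le> c) \<Longrightarrow> upper_prob \<P> A \<le> c"
  unfolding upper_prob_def by (rule cSUP_least[OF family_nonempty])

lemma lower_prob_lower: "P \<in> \<P> \<Longrightarrow> A \<in> F \<Longrightarrow> lower_prob \<P> A \<le> P A"
  unfolding lower_prob_def
  by (rule cINF_lower) (auto intro!: bdd_belowI[of _ 0] dest!: fa_prob_member simp: fa_prob_def)

lemma lower_prob_greatest: "(\<And>P. P \<in> \<P> \<Longrightarrow> c \<le> P A) \<Longrightarrow> c \<le> lower_prob \<P> A"
  unfolding lower_prob_def by (rule cINF_greatest[OF family_nonempty])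

lemma upper_prob_eq_1_minus_lower_prob_compl:
  assumes "A \<in> F"
  shows "upper_prob \<P> A = 1 - lower_prob \<P> (\<Omega> - A)"
proof -
  have "\<Omega> - A \<in> F" using assms by auto
  have compl: "P (\<Omega> - A) = 1 - P A" if "P \<in> \<P>" for P
    using fa_prob_compl[OF algebra_axioms fa_prob_member[OF that] assms] .
  have "upper_prob \<P> A \<le> 1 - lower_prob \<P> (\<Omega> - A)"
  proof (rule upper_prob_least)
    fix P assume P: "P \<in> \<P>"
    have "lower_prob \<P> (\<Omega> - A) \<le> P (\<Omega> - A)"
      by (rule lower_prob_lower[OF P \<open>\<Omega> - A \<in> F\<close>])
    then show "P A \<le> 1 - lower_prob \<P> (\<Omega> - A)" using compl[OF P] by linarith
  qed
  moreover have "1 - upper_prob \<P> A \<le> lower_prob \<P> (\<Omega> - A)"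
  proof (rule lower_prob_greatest)
    fix P assume P: "P \<in> \<P>"
    have "P A \<le> upper_prob \<P> A" by (rule upper_prob_upper[OF P assms])
    then show "1 - upper_prob \<P> A \<le> P (\<Omega> - A)" using compl[OF P] by linarith
  qed
  ultimately show ?thesis by linarith
qed

lemma lower_prob_eq_1_minus_upper_prob_compl:
  assumes "A \<in> F"
  shows "lower_prob \<P> A = 1 - upper_prob \<P> (\<Omega> - A)"
proof -
  have "\<Omega> - (\<Omega> - A) = A" using assms sets_into_space by blast
  then show ?thesis using upper_prob_eq_1_minus_lower_prob_compl[OF compl_sets[OF assms]] by simp
qed

lemma upper_prob_empty: "upper_prob \<P> {} = 0"
proof -
  have "P {} = 0" if "P \<in> \<P>" for P
    using fa_prob_empty[OF ring_of_sets_axioms fa_prob_member[OF that]] .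
  moreover obtain P where "P \<in> \<P>" using family_nonempty by blast
  ultimately show ?thesis
    using upper_prob_upper[of P "{}"] upper_prob_least[of "{}" 0] by force
qed

lemma lower_prob_space: "lower_prob \<P> \<Omega> = 1"
  using lower_prob_eq_1_minus_upper_prob_compl[OF top] upper_prob_empty by simp

lemma upper_prob_mono:
  assumes "A \<in> F" "B \<in> F" "A \<subseteq> B"
  shows "upper_prob \<P> A \<le> upper_prob \<P> B"
proof (rule upper_prob_least)
  fix P assume P: "P \<in> \<P>"
  have "P A \<le> P B"
    using fa_prob_Diff[OF ring_of_sets_axioms fa_prob_member[OF P] assms] assms
      fa_prob_member[OF P] by (auto simp: fa_prob_def)
  also have "\<dots> \<le> upper_prob \<P> B" using upper_prob_upper[OF P assms(2)] .
  finally show "P A \<le> upper_prob \<P> B" .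
qed

lemma upper_prob_subadditive_Diff:
  assumes "A \<in> F" "B \<in> F" "A \<subseteq> B"
  shows "upper_prob \<P> B \<le> upper_prob \<P> A + upper_prob \<P> (B - A)"
proof (rule upper_prob_least)
  fix P assume P: "P \<in> \<P>"
  have "P B = P A + P (B - A)"
    using fa_prob_Diff[OF ring_of_sets_axioms fa_prob_member[OF P] assms] .
  also have "\<dots> \<le> upper_prob \<P> A + upper_prob \<P> (B - A)"
    using upper_prob_upper[OF P] assms by (intro add_mono) auto
  finally show "P B \<le> upper_prob \<P> A + upper_prob \<P> (B - A)" .
qed

lemma core_lower_prob_le_upper_prob:
  assumes "Q \<in> core \<Omega> F (lower_prob \<P>)" "A \<in> F"
  shows "Q A \<le> upper_prob \<P> A"
proof -
  have fa: "fa_prob \<Omega> F Q" and "lower_prob \<P> (\<Omega> - A) \<le> Q (\<Omega> - A)"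
    using assms unfolding core_def Delta_def by auto
  then show ?thesis
    using fa_prob_compl[OF algebra_axioms fa assms(2)] upper_prob_eq_1_minus_lower_prob_compl[OF assms(2)]
    by simp
qed

lemma core_lower_prob_subset_Delta_sigma:
  assumes "continuous_at_empty F (upper_prob \<P>)"
  shows "core \<Omega> F (lower_prob \<P>) \<subseteq> Delta_sigma \<Omega> F"
proof
  fix Q assume Q: "Q \<in> core \<Omega> F (lower_prob \<P>)"
  then have fa: "fa_prob \<Omega> F Q" unfolding core_def Delta_def by auto
  have "continuous_at_empty F Q"
  proof (rule continuous_at_empty_dominated[OF _ assms])
    fix A assume "A \<in> F"
    with fa core_lower_prob_le_upper_prob[OF Q]
    show "0 \<le> Q A \<and> Q A \<le> upper_prob \<P> A" unfolding fa_prob_def by blast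
  qed
  then show "Q \<in> Delta_sigma \<Omega> F"
    by (rule fa_prob_continuous_at_empty_imp_Delta_sigma[OF ring_of_sets_axioms fa])
qed

end

theorem proposition2:
  fixes \<Omega> :: "'a set" and F :: "'a set set" and \<P> :: "('a set \<Rightarrow> real) set"
  assumes "sigma_algebra \<Omega> F"
    and "\<P> \<noteq> {}" and "\<P> \<subseteq> Delta \<Omega> F"
  shows "(continuous_at_empty F (upper_prob \<P>) \<longleftrightarrow> set_fun_continuous F (upper_prob \<P>))
       \<and> (set_fun_continuous F (upper_prob \<P>) \<longleftrightarrow> set_fun_continuous F (lower_prob \<P>))
       \<and> (set_fun_continuous F (lower_prob \<P>) \<longleftrightarrow> continuous_at_Omega \<Omega> F (lower_prob \<P>))
       \<and> (continuous_at_empty F (upper_prob \<P>) \<longrightarrow> core \<Omega> F (lower_prob \<P>) \<subseteq> Delta_sigma \<Omega> F)"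
proof -
  interpret fa_prob_family \<Omega> F \<P>
    using assms by (simp add: fa_prob_family_def fa_prob_family_axioms_def sigma_algebra.axioms(1))
  let ?V = "upper_prob \<P>" and ?v = "lower_prob \<P>"
  have i_ii: "continuous_at_empty F ?V \<Longrightarrow> set_fun_continuous F ?V"
    by (rule continuous_at_empty_imp_set_fun_continuous[OF ring_of_sets_axioms upper_prob_mono
          upper_prob_subadditive_Diff])
  have ii_i: "set_fun_continuous F ?V \<Longrightarrow> continuous_at_empty F ?V"
    using set_fun_continuous_imp_continuous_at_empty empty_sets upper_prob_empty by blast
  have ii_iii: "set_fun_continuous F ?V \<Longrightarrow> set_fun_continuous F ?v"
    using set_fun_continuous_compl_dual[OF algebra_axioms, of ?v ?V]
      lower_prob_eq_1_minus_upper_prob_compl by blast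
  have iii_iv: "set_fun_continuous F ?v \<Longrightarrow> continuous_at_Omega \<Omega> F ?v"
    using set_fun_continuous_imp_continuous_at_Omega top lower_prob_space by blast
  have iv_i: "continuous_at_Omega \<Omega> F ?v \<Longrightarrow> continuous_at_empty F ?V"
    using continuous_at_empty_compl_dual[OF algebra_axioms, of ?V ?v]
      upper_prob_eq_1_minus_lower_prob_compl by blast
  show ?thesis
    using i_ii ii_i ii_iii iii_iv iv_i core_lower_prob_subset_Delta_sigma by blast
qed

end
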